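(* Let $T$ be a c.n.u. contraction on $H$. For $a\in A_T^{\perp_s}$ write $a=(x_0,Tx_0)+(a_+,0)+(0,a_-)$ with $x_0\in\mathbb{K}$, $a_+\in\mathbb{K}^\perp$, $a_-\in\mathbb{K}_*^\perp$ (this decomposition exists and is unique since $A_T^{\perp_s}=A_T\oplus_\perp Q\oplus_\perp Q_*$), and set $\Gamma_+a=a_+$, $\Gamma_-a=a_-$. Then $(\mathbb{K}^\perp,\mathbb{K}_*^\perp,\Gamma_+,\Gamma_-)$ is a boundary quadruple for $A_T^{\perp_s}$.
   Context: $H$ is an infinite-dimensional separable complex Hilbert space. A c.n.u. contraction is $T\in\mathbb{B}(H)$ with $\|T\|\le1$ having no nonzero invariant subspace on which it is unitary. $\mathbb{K}=\ker(I-T^*T)$, $\mathbb{K}_*=\ker(I-TT^* )$. $\mathbb{H}=H\oplus_\perp H$ carries the strong symplectic structure $[(x_1,x_2),(y_1,y_2)]=i(x_1,y_1)_H-i(x_2,y_2)_H$; $S^{\perp_s}=\{a:[a,b]=0\ \forall b\in S\}$. $A_T=\{(x,Tx):x\in\mathbb{K}\}$, $Q=\{(x,0):x\in\mathbb{K}^\perp\}$, $Q_*=\{(0,x):x\in\mathbb{K}_*^\perp\}$. For an isotropic closed subspace $A\subseteq\mathbb{H}$ (i.e. $[a,b]=0$ for $a,b\in A$), a boundary quadruple for $A^{\perp_s}$ is $(H_+,H_-,\Gamma_+,\Gamma_-)$ where $H_\pm$ are Hilbert spaces and $\Gamma_\pm:A^{\perp_s}\to H_\pm$ are linear maps such that $(\Gamma_+,\Gamma_-):A^{\perp_s}\to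 H_+\oplus_\perp H_-$ is bounded, surjective, has kernel exactly $A$, and the abstract Green formula $[a,b]=i(\Gamma_+a,\Gamma_+b)_{H_+}-i(\Gamma_-a,\Gamma_-b)_{H_-}$ holds for all $a,b\in A^{\perp_s}$ (equivalently, $(\Gamma_+,\Gamma_-)$ induces a symplectic topological isomorphism of $A^{\perp_s}/A$ onto $H_+\oplus_\perp H_-$ with the standard structure $i(\cdot,\cdot)_{H_+}-i(\cdot,\cdot)_{H_-}$). *)

theory Defs
  imports "HOL-Analysis.Analysis"
begin

text \<open>The distribution has no complex Hilbert spaces, so we introduce them as a type class:
  a real normed vector space with a complex scalar multiplication extending the real one and
  a complex inner product (conjugate-linear in the first, linear in the second argument)
  inducing the norm.\<close>

class complex_inner = real_normed_vector +
  fixes scaleC :: "complex \<Rightarrow> 'a \<Rightarrow> 'a"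
    and cinner :: "'a \<Rightarrow> 'a \<Rightarrow> complex"
  assumes scaleC_of_real: "scaleC (complex_of_real r) x = scaleR r x"
    and scaleC_add_right: "scaleC c (x + y) = scaleC c x + scaleC c y"
    and scaleC_add_left: "scaleC (c + d) x = scaleC c x + scaleC d x"
    and scaleC_scaleC: "scaleC c (scaleC d x) = scaleC (c * d) x"
    and scaleC_one: "scaleC 1 x = x"
    and cinner_commute: "cinner x y = cnj (cinner y x)"
    and cinner_add_right: "cinner x (y + z) = cinner x y + cinner x z"
    and cinner_scaleC_right: "cinner x (scaleC c y) = c * cinner x y"
    and cinner_self_real: "Im (cinner x x) = 0"
    and cinner_self_nonneg: "0 \<le> Re (cinner x x)"
    and cinner_self_eq_zero: "cinner x x = 0 \<longleftrightarrow> x = 0"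
    and norm_eq_sqrt_cinner: "norm x = sqrt (Re (cinner x x))"

class chilbert_space = complex_inner + complete_space

definition csubspace :: "'a::complex_inner set \<Rightarrow> bool" where
  "csubspace S \<longleftrightarrow> 0 \<in> S \<and> (\<forall>x\<in>S. \<forall>y\<in>S. x + y \<in> S) \<and> (\<forall>c. \<forall>x\<in>S. scaleC c x \<in> S)"

definition closed_csubspace :: "'a::complex_inner set \<Rightarrow> bool" where
  "closed_csubspace S \<longleftrightarrow> csubspace S \<and> closed S"

definition orth :: "'a::complex_inner set \<Rightarrow> 'a set" where
  "orth S = {x. \<forall>y\<in>S. cinner y x = 0}"

definition clinear :: "('a::complex_inner \<Rightarrow> 'b::complex_inner) \<Rightarrow> bool" where
  "clinear f \<longleftrightarrow> (\<forall>x y. f (x + y) = f x + f y) \<and> (\<forall>c x. f (scaleC c x) = scaleC c (f x))"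

definition bounded_clinear :: "('a::complex_inner \<Rightarrow> 'b::complex_inner) \<Rightarrow> bool" where
  "bounded_clinear f \<longleftrightarrow> clinear f \<and> (\<exists>C. \<forall>x. norm (f x) \<le> C * norm x)"

definition is_adjoint :: "('a::complex_inner \<Rightarrow> 'a) \<Rightarrow> ('a \<Rightarrow> 'a) \<Rightarrow> bool" where
  "is_adjoint T Ts \<longleftrightarrow> (\<forall>x y. cinner (T x) y = cinner x (Ts y))"

definition separable_chilbert :: "'a::chilbert_space itself \<Rightarrow> bool" where
  "separable_chilbert _ \<longleftrightarrow> (\<exists>D::'a set. countable D \<and> closure D = UNIV)"

definition infinite_dimensional :: "'a::complex_inner itself \<Rightarrow> bool" where
  "infinite_dimensional _ \<longleftrightarrow>
     \<not> (\<exists>F::'a set. finite F \<and> (\<forall>x. \<exists>c. x = (\<Sum>f\<in>F. scaleC (c f) f)))"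

definition contraction :: "('a::complex_inner \<Rightarrow> 'a) \<Rightarrow> bool" where
  "contraction T \<longleftrightarrow> bounded_clinear T \<and> (\<forall>x. norm (T x) \<le> norm x)"

definition cnu :: "('a::complex_inner \<Rightarrow> 'a) \<Rightarrow> bool" where
  "cnu T \<longleftrightarrow> \<not> (\<exists>M. closed_csubspace M \<and> M \<noteq> {0} \<and> T ` M = M \<and> (\<forall>x\<in>M. norm (T x) = norm x))"

definition cnu_contraction :: "('a::complex_inner \<Rightarrow> 'a) \<Rightarrow> bool" where
  "cnu_contraction T \<longleftrightarrow> contraction T \<and> cnu T"

definition sympl :: "'a::complex_inner \<times> 'a \<Rightarrow> 'a \<times> 'a \<Rightarrow> complex" where
  "sympl a b = \<i> * cinner (fst a) (fst b) - \<i> * cinner (snd a) (snd b)"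

definition s_orth :: "('a::complex_inner \<times> 'a) set \<Rightarrow> ('a \<times> 'a) set" where
  "s_orth S = {a. \<forall>b\<in>S. sympl a b = 0}"

definition isotropic :: "('a::complex_inner \<times> 'a) set \<Rightarrow> bool" where
  "isotropic A \<longleftrightarrow> (\<forall>a\<in>A. \<forall>b\<in>A. sympl a b = 0)"

definition scaleC_pair :: "complex \<Rightarrow> 'a::complex_inner \<times> 'a \<Rightarrow> 'a \<times> 'a" where
  "scaleC_pair c a = (scaleC c (fst a), scaleC c (snd a))"

text \<open>Boundary quadruple for the symplectic orthogonal of A, where the boundary spaces are given as closed
  subspaces Hp, Hm of complex Hilbert spaces (with the inherited inner product).  The
  definition presupposes that A is a closed isotropic subspace; we include this.\<close>
definition boundary_quadruple ::
  "('a::chilbert_space \<times> 'a) set \<Rightarrow> 'b::chilbert_space set \<Rightarrow> 'c::chilbert_space set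
     \<Rightarrow> ('a \<times> 'a \<Rightarrow> 'b) \<Rightarrow> ('a \<times> 'a \<Rightarrow> 'c) \<Rightarrow> bool" where
  "boundary_quadruple A Hp Hm Gp Gm \<longleftrightarrow>
     closed A \<and> (0::'a\<times>'a) \<in> A
     \<and> (\<forall>a\<in>A. \<forall>b\<in>A. a + b \<in> A) \<and> (\<forall>c. \<forall>a\<in>A. scaleC_pair c a \<in> A)
     \<and> isotropic A
     \<and> closed_csubspace Hp \<and> closed_csubspace Hm
     \<and> (\<forall>a\<in>s_orth A. Gp a \<in> Hp \<and> Gm a \<in> Hm)
     \<and> (\<forall>a\<in>s_orth A. \<forall>b\<in>s_orth A. Gp (a + b) = Gp a + Gp b \<and> Gm (a + b) = Gm a + Gm b)
     \<and> (\<forall>c. \<forall>a\<in>s_orth A. Gp (scaleC_pair c a) = scaleC c (Gp a) \<and> Gm (scaleC_pair c a) = scaleC c (Gm a))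
     \<and> (\<exists>C. \<forall>a\<in>s_orth A. norm (Gp a, Gm a) \<le> C * norm a)
     \<and> (\<forall>p\<in>Hp. \<forall>m\<in>Hm. \<exists>a\<in>s_orth A. Gp a = p \<and> Gm a = m)
     \<and> {a\<in>s_orth A. Gp a = 0 \<and> Gm a = 0} = A
     \<and> (\<forall>a\<in>s_orth A. \<forall>b\<in>s_orth A.
          sympl a b = \<i> * cinner (Gp a) (Gp b) - \<i> * cinner (Gm a) (Gm b))"

definition defK :: "('a::complex_inner \<Rightarrow> 'a) \<Rightarrow> ('a \<Rightarrow> 'a) \<Rightarrow> 'a set" where
  "defK T Ts = {x. x - Ts (T x) = 0}"

definition defKs :: "('a::complex_inner \<Rightarrow> 'a) \<Rightarrow> ('a \<Rightarrow> 'a) \<Rightarrow> 'a set" where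
  "defKs T Ts = {x. x - T (Ts x) = 0}"

definition A_T :: "('a::complex_inner \<Rightarrow> 'a) \<Rightarrow> ('a \<Rightarrow> 'a) \<Rightarrow> ('a \<times> 'a) set" where
  "A_T T Ts = {(x, T x) | x. x \<in> defK T Ts}"

definition Gamma_plus :: "('a::complex_inner \<Rightarrow> 'a) \<Rightarrow> ('a \<Rightarrow> 'a) \<Rightarrow> 'a \<times> 'a \<Rightarrow> 'a" where
  "Gamma_plus T Ts a = (THE ap. \<exists>x0 am. x0 \<in> defK T Ts \<and> ap \<in> orth (defK T Ts)
      \<and> am \<in> orth (defKs T Ts) \<and> a = (x0, T x0) + (ap, 0) + (0, am))"

definition Gamma_minus :: "('a::complex_inner \<Rightarrow> 'a) \<Rightarrow> ('a \<Rightarrow> 'a) \<Rightarrow> 'a \<times> 'a \<Rightarrow> 'a" where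
  "Gamma_minus T Ts a = (THE am. \<exists>x0 ap. x0 \<in> defK T Ts \<and> ap \<in> orth (defK T Ts)
      \<and> am \<in> orth (defKs T Ts) \<and> a = (x0, T x0) + (ap, 0) + (0, am))"

end

theory Submission
  imports Defs
begin

(* Write a = (u, v). By the projection theorem, v = v1 + a_- with v1 in K_* and a_- orthogonal
   to K_*; then x0 = T* v1 lies in K and T x0 = v1. Pairing a symplectically with (k, T k),
   k in K, and using that T is isometric on K shows that a_+ = u - x0 is orthogonal to K.
   Conversely, since T maps K into K_* and preserves inner products there, all cross terms of
   [a, b] vanish for decomposed a and b; this gives both the symplectic orthogonality of the
   decomposed vectors to A_T and Green's formula. The decomposition is unique because K meets
   its orthogonal complement only in 0, so Gamma_+ and Gamma_- are well defined and linear, and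
   |x0| <= |T| |v| bounds them. *)

section \<open>Complex inner product spaces\<close>

lemma cinner_add_left: "cinner (x + y) z = cinner x z + cinner (y::'a::complex_inner) z"
  by (metis cinner_commute cinner_add_right complex_cnj_add)

lemma cinner_scaleC_left: "cinner (scaleC c x) y = cnj c * cinner (x::'a::complex_inner) y"
  by (metis cinner_commute cinner_scaleC_right complex_cnj_mult)

lemma cinner_zero_right [simp]: "cinner (x::'a::complex_inner) 0 = 0"
  using cinner_add_right[of x 0 0] by simp

lemma cinner_zero_left [simp]: "cinner 0 (x::'a::complex_inner) = 0"
  using cinner_add_left[of 0 0 x] by simp

lemma cinner_minus_right: "cinner (x::'a::complex_inner) (- y) = - cinner x y"
  using cinner_add_right[of x y "- y"] by (simp add: eq_neg_iff_add_eq_0 add.commute)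

lemma cinner_minus_left: "cinner (- x) (y::'a::complex_inner) = - cinner x y"
  using cinner_add_left[of x "- x" y] by (simp add: eq_neg_iff_add_eq_0 add.commute)

lemma cinner_diff_right: "cinner (x::'a::complex_inner) (y - z) = cinner x y - cinner x z"
  unfolding diff_conv_add_uminus cinner_add_right cinner_minus_right by simp

lemma cinner_diff_left: "cinner (x - y) (z::'a::complex_inner) = cinner x z - cinner y z"
  unfolding diff_conv_add_uminus cinner_add_left cinner_minus_left by simp

lemma power2_norm_eq_cinner: "(norm (x::'a::complex_inner))\<^sup>2 = Re (cinner x x)"
  by (simp add: norm_eq_sqrt_cinner cinner_self_nonneg)

lemma cinner_self_eq_power2_norm: "cinner x x = complex_of_real ((norm (x::'a::complex_inner))\<^sup>2)"
  by (simp add: power2_norm_eq_cinner complex_eq_iff cinner_self_real)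

lemma norm_add_power2:
  "(norm (x + y))\<^sup>2 = (norm x)\<^sup>2 + (norm y)\<^sup>2 + 2 * Re (cinner x (y::'a::complex_inner))"
proof -
  have "Re (cinner y x) = Re (cinner x y)"
    by (subst cinner_commute) simp
  then show ?thesis
    by (simp add: power2_norm_eq_cinner cinner_add_left cinner_add_right)
qed

lemma norm_diff_power2:
  "(norm (x - y))\<^sup>2 = (norm x)\<^sup>2 + (norm y)\<^sup>2 - 2 * Re (cinner x (y::'a::complex_inner))"
  using norm_add_power2[of x "- y"] by (simp add: cinner_minus_right)

lemma parallelogram_law:
  "(norm (x + y))\<^sup>2 + (norm (x - y))\<^sup>2 = 2 * (norm x)\<^sup>2 + 2 * (norm (y::'a::complex_inner))\<^sup>2"
  by (simp add: norm_add_power2 norm_diff_power2)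

lemma Re_cinner_le_norm: "Re (cinner x y) \<le> norm x * norm (y::'a::complex_inner)"
proof -
  have "(norm (x + y))\<^sup>2 \<le> (norm x + norm y)\<^sup>2"
    by (simp add: norm_triangle_ineq power_mono)
  then show ?thesis
    by (simp add: norm_add_power2 power2_sum)
qed

lemma scaleC_zero_right [simp]: "scaleC c (0::'a::complex_inner) = 0"
  using scaleC_add_right[of c "0::'a" 0] by simp

lemma scaleC_minus_right: "scaleC c (- x::'a::complex_inner) = - scaleC c x"
  using scaleC_add_right[of c x "- x"] by (simp add: eq_neg_iff_add_eq_0 add.commute)

lemma scaleC_diff_right: "scaleC c (x - y::'a::complex_inner) = scaleC c x - scaleC c y"
  unfolding diff_conv_add_uminus scaleC_add_right scaleC_minus_right by simp

lemma scaleR_eq_scaleC: "scaleR r x = scaleC (complex_of_real r) (x::'a::complex_inner)"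
  by (simp add: scaleC_of_real)

lemma norm_scaleC: "norm (scaleC c x) = cmod c * norm (x::'a::complex_inner)"
proof -
  have "cinner (scaleC c x) (scaleC c x) = cnj c * c * cinner x x"
    by (simp add: cinner_scaleC_left cinner_scaleC_right ac_simps)
  then have "(norm (scaleC c x))\<^sup>2 = (cmod c * norm x)\<^sup>2"
    unfolding power2_norm_eq_cinner[of "scaleC c x"] cinner_self_eq_power2_norm[of x]
      mult.commute[of "cnj c"] complex_norm_square[symmetric]
    by (simp add: power_mult_distrib)
  then show ?thesis
    by (simp add: power2_eq_iff_nonneg)
qed

lemma cinner_cauchy_schwarz: "cmod (cinner x y) \<le> norm x * norm (y::'a::complex_inner)"
proof (cases "cinner x y = 0")
  case False
  define c where "c = cnj (cinner x y) / complex_of_real (cmod (cinner x y))"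
  have "c * cinner x y = complex_of_real (cmod (cinner x y))"
    using False unfolding c_def
    by (simp add: mult.commute complex_norm_square[symmetric] power2_eq_square)
  then have "cmod (cinner x y) = Re (cinner x (scaleC c y))"
    by (simp add: cinner_scaleC_right)
  also have "\<dots> \<le> norm x * norm y"
    using Re_cinner_le_norm[of x "scaleC c y"] False by (simp add: norm_scaleC c_def norm_divide)
  finally show ?thesis .
qed simp

lemma csubspace_scaleR: "csubspace S \<Longrightarrow> x \<in> S \<Longrightarrow> scaleR r x \<in> S"
  by (simp add: csubspace_def scaleR_eq_scaleC)

lemma csubspace_diff:
  assumes "csubspace S" "x \<in> S" "y \<in> S"
  shows "x - y \<in> S"
proof -
  have "scaleR (- 1) y \<in> S"
    using assms(1,3) by (rule csubspace_scaleR)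
  then have "x + scaleR (- 1) y \<in> S"
    using assms(1,2) unfolding csubspace_def by blast
  then show ?thesis
    by simp
qed

lemma orthD: "x \<in> orth S \<Longrightarrow> y \<in> S \<Longrightarrow> cinner y x = 0"
  by (simp add: orth_def)

lemma orthD': "x \<in> orth S \<Longrightarrow> y \<in> S \<Longrightarrow> cinner x y = 0"
  using orthD cinner_commute by (metis complex_cnj_zero)

lemma orth_zero [simp]: "0 \<in> orth S"
  by (simp add: orth_def)

lemma mem_orth_self_eq_0: "x \<in> S \<Longrightarrow> x \<in> orth S \<Longrightarrow> x = 0"
  using orthD cinner_self_eq_zero by blast

lemma csubspace_orth: "csubspace (orth S)"
  by (auto simp: csubspace_def orth_def cinner_add_right cinner_scaleC_right)

lemma bounded_linear_cinner_right: "bounded_linear (cinner (y::'a::complex_inner))"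
proof (rule bounded_linear_intro[where K = "norm y"])
  show "cmod (cinner y x) \<le> norm x * norm y" for x
    using cinner_cauchy_schwarz[of y x] by (simp add: mult.commute)
qed (simp_all add: cinner_add_right scaleR_eq_scaleC cinner_scaleC_right scaleR_conv_of_real)

lemma closed_csubspace_orth: "closed_csubspace (orth (S::'a::complex_inner set))"
proof -
  have "closed {x. cinner y x = 0}" for y :: 'a
    using linear_continuous_on[OF bounded_linear_cinner_right]
    by (intro closed_Collect_eq) auto
  moreover have "orth S = (\<Inter>y\<in>S. {x. cinner y x = 0})"
    by (auto simp: orth_def)
  ultimately have "closed (orth S)"
    by auto
  then show ?thesis
    by (simp add: closed_csubspace_def csubspace_orth)
qed

lemma closed_csubspace_kernel:
  assumes "clinear f" "continuous_on UNIV f"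
  shows "closed_csubspace {x. f x = 0}"
proof -
  have "f 0 = 0"
    using assms(1) unfolding clinear_def by (metis add_cancel_right_right)
  then have "csubspace {x. f x = 0}"
    using assms(1) by (simp add: csubspace_def clinear_def)
  moreover have "closed {x. f x = 0}"
    using assms(2) by (intro closed_Collect_eq) auto
  ultimately show ?thesis
    by (simp add: closed_csubspace_def)
qed

section \<open>The projection theorem\<close>

lemma eq_0_if_quadratic_bound:
  fixes r N :: real
  assumes "0 \<le> N" and bound: "\<And>t. 2 * t * r \<le> t\<^sup>2 * N"
  shows "r = 0"
proof -
  define t where "t = r / (N + 1)"
  have t: "t * (N + 1) = r"
    using \<open>0 \<le> N\<close> by (simp add: t_def)
  have "2 * t * r * (N + 1)\<^sup>2 \<le> t\<^sup>2 * N * (N + 1)\<^sup>2"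
    using bound[of t] by (rule mult_right_mono) simp
  then have "2 * r\<^sup>2 * (N + 1) \<le> r\<^sup>2 * N"
    unfolding t[symmetric] by (simp add: power2_eq_square algebra_simps)
  then have "r\<^sup>2 * (N + 2) \<le> 0"
    by (simp add: algebra_simps)
  then show ?thesis
    using \<open>0 \<le> N\<close> by (simp add: mult_le_0_iff)
qed

lemma nearest_point_residual_orth:
  assumes "csubspace M" "m \<in> M" and nearest: "\<And>m'. m' \<in> M \<Longrightarrow> norm (v - m) \<le> norm (v - m')"
  shows "v - m \<in> orth M"
proof -
  have Re_0: "Re (cinner (v - m) k) = 0" if "k \<in> M" for k
  proof (rule eq_0_if_quadratic_bound)
    fix t :: real
    have "m + scaleR t k \<in> M"
      using assms(1,2) csubspace_scaleR[OF assms(1) that] by (simp add: csubspace_def)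
    then have "norm (v - m) \<le> norm ((v - m) - scaleR t k)"
      unfolding diff_diff_eq by (rule nearest)
    then have "(norm (v - m))\<^sup>2 \<le> (norm ((v - m) - scaleR t k))\<^sup>2"
      by (simp add: power_mono)
    then show "2 * t * Re (cinner (v - m) k) \<le> t\<^sup>2 * (norm k)\<^sup>2"
      by (simp add: norm_diff_power2 scaleR_eq_scaleC cinner_scaleC_right norm_scaleC power_mult_distrib)
  qed simp
  have "cinner k (v - m) = 0" if "k \<in> M" for k
  proof -
    have "scaleC \<i> k \<in> M"
      using assms(1) that by (simp add: csubspace_def)
    then have "Re (cinner (v - m) (scaleC \<i> k)) = 0"
      by (rule Re_0)
    then have "Im (cinner (v - m) k) = 0"
      by (simp add: cinner_scaleC_right)
    with Re_0[OF that] have "cinner (v - m) k = 0"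
      by (simp add: complex_eq_iff)
    then show ?thesis
      by (subst cinner_commute) simp
  qed
  then show ?thesis
    by (simp add: orth_def)
qed

lemma Cauchy_if_minimizing:
  fixes m :: "nat \<Rightarrow> 'a::complex_inner"
  assumes "0 \<le> d"
    and above: "\<And>p q. d \<le> norm (v - scaleR (1/2) (m p + m q))"
    and close: "\<And>n. (norm (v - m n))\<^sup>2 \<le> d\<^sup>2 + 1 / Suc n"
  shows "Cauchy m"
proof (rule CauchyI)
  have gap: "(norm (m p - m q))\<^sup>2 \<le> 2 / Suc p + 2 / Suc q" for p q
  proof -
    have "(v - m q) + (v - m p) = scaleR 2 (v - scaleR (1/2) (m p + m q))"
      by (simp add: scaleR_right_diff_distrib scaleR_2 algebra_simps)
    then have "4 * d\<^sup>2 \<le> (norm ((v - m q) + (v - m p)))\<^sup>2"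
      using above[of p q] \<open>0 \<le> d\<close> by (simp add: power_mult_distrib power_mono)
    moreover have "(v - m q) - (v - m p) = m p - m q"
      by simp
    ultimately show ?thesis
      using parallelogram_law[of "v - m q" "v - m p"] close[of p] close[of q] by simp
  qed
  fix e :: real
  assume "0 < e"
  obtain N :: nat where "4 / e\<^sup>2 < N"
    using reals_Archimedean2 by blast
  then have N: "4 / Suc N < e\<^sup>2"
    using \<open>0 < e\<close> by (simp add: field_simps) (smt (verit) zero_less_power)
  have "norm (m p - m q) < e" if "N \<le> p" "N \<le> q" for p q
  proof -
    have "2 / Suc p \<le> 2 / Suc N" "2 / Suc q \<le> 2 / Suc N"
      using that by (simp_all add: frac_le)
    then have "(norm (m p - m q))\<^sup>2 < e\<^sup>2"
      using gap[of p q] N by linarith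
    then show ?thesis
      using \<open>0 < e\<close> by (simp add: power_less_imp_less_base)
  qed
  then show "\<exists>N. \<forall>p\<ge>N. \<forall>q\<ge>N. norm (m p - m q) < e"
    by blast
qed

lemma infdist_lessE:
  assumes "A \<noteq> {}" "infdist x A < e"
  obtains a where "a \<in> A" "dist x a < e"
proof -
  have "bdd_below (dist x ` A)"
    by (rule bdd_belowI2[of _ 0]) simp
  then show ?thesis
    using assms that cINF_less_iff[of A "dist x" e] by (auto simp: infdist_notempty)
qed

lemma closed_csubspace_nearest_point:
  fixes M :: "'a::chilbert_space set"
  assumes "closed_csubspace M"
  obtains m where "m \<in> M" "\<And>m'. m' \<in> M \<Longrightarrow> norm (v - m) \<le> norm (v - m')"
proof -
  have "csubspace M" "closed M"
    using assms by (simp_all add: closed_csubspace_def)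
  then have "M \<noteq> {}"
    by (auto simp: csubspace_def)
  define d where "d = infdist v M"
  have d_le: "d \<le> norm (v - m)" if "m \<in> M" for m
    using infdist_le[OF that, of v] by (simp add: d_def dist_norm)
  have "0 \<le> d"
    by (simp add: d_def infdist_nonneg)
  have "\<exists>m\<in>M. (norm (v - m))\<^sup>2 \<le> d\<^sup>2 + 1 / Suc n" for n
  proof -
    have "d < sqrt (d\<^sup>2 + 1 / Suc n)"
      using \<open>0 \<le> d\<close> real_sqrt_less_mono[of "d\<^sup>2" "d\<^sup>2 + 1 / Suc n"] by simp
    then obtain m where "m \<in> M" "norm (v - m) < sqrt (d\<^sup>2 + 1 / Suc n)"
      using infdist_lessE[OF \<open>M \<noteq> {}\<close>] unfolding d_def dist_norm by blast
    moreover have "(norm (v - m))\<^sup>2 \<le> (sqrt (d\<^sup>2 + 1 / Suc n))\<^sup>2"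
      using \<open>norm (v - m) < sqrt (d\<^sup>2 + 1 / Suc n)\<close> by (intro power_mono) auto
    ultimately show ?thesis
      by auto
  qed
  then obtain ms where ms: "\<And>n. ms n \<in> M" "\<And>n. (norm (v - ms n))\<^sup>2 \<le> d\<^sup>2 + 1 / Suc n"
    by metis
  have "Cauchy ms"
  proof (rule Cauchy_if_minimizing[OF \<open>0 \<le> d\<close>])
    show "d \<le> norm (v - scaleR (1/2) (ms p + ms q))" for p q
      using \<open>csubspace M\<close> ms(1) by (intro d_le csubspace_scaleR) (simp_all add: csubspace_def)
  qed (rule ms(2))
  then obtain m where lim: "ms \<longlonglongrightarrow> m"
    using Cauchy_convergent_iff convergent_def by blast
  have "m \<in> M"
    using \<open>closed M\<close> ms(1) lim by (rule closed_sequentially)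
  have "(\<lambda>n. (norm (v - ms n))\<^sup>2) \<longlonglongrightarrow> (norm (v - m))\<^sup>2"
    by (intro tendsto_intros lim)
  moreover have "(\<lambda>n. d\<^sup>2 + 1 / Suc n) \<longlonglongrightarrow> d\<^sup>2"
    using tendsto_add[OF tendsto_const LIMSEQ_inverse_real_of_nat, of "d\<^sup>2"]
    by (simp add: inverse_eq_divide)
  ultimately have "(norm (v - m))\<^sup>2 \<le> d\<^sup>2"
    by (rule LIMSEQ_le) (use ms(2) in blast)
  then have "norm (v - m) \<le> d"
    using \<open>0 \<le> d\<close> by (rule power2_le_imp_le)
  with \<open>m \<in> M\<close> d_le show ?thesis
    using that by (meson order_trans)
qed

lemma closed_csubspace_orth_decomposition:
  fixes M :: "'a::chilbert_space set"
  assumes "closed_csubspace M"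
  obtains m where "m \<in> M" "v - m \<in> orth M"
proof -
  have "csubspace M"
    using assms by (simp add: closed_csubspace_def)
  obtain m where "m \<in> M" and nearest: "\<And>m'. m' \<in> M \<Longrightarrow> norm (v - m) \<le> norm (v - m')"
    using closed_csubspace_nearest_point[OF assms] by metis
  then show ?thesis
    using that nearest_point_residual_orth[OF \<open>csubspace M\<close>] by blast
qed

section \<open>Adjoints\<close>

lemma cinner_extensionality:
  assumes "\<And>z. cinner z a = cinner z (b::'a::complex_inner)"
  shows "a = b"
proof -
  have "cinner (a - b) (a - b) = 0"
    using assms by (simp add: cinner_diff_right)
  then show ?thesis
    by (simp add: cinner_self_eq_zero)
qed

lemma bounded_linear_if_bounded_clinear:
  assumes "bounded_clinear f"
  shows "bounded_linear f"
proof -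
  obtain C where "clinear f" "\<And>x. norm (f x) \<le> C * norm x"
    using assms by (auto simp: bounded_clinear_def)
  then show ?thesis
    by (intro bounded_linear_intro[where K = C]) (auto simp: clinear_def scaleR_eq_scaleC mult.commute)
qed

lemma is_adjoint_sym:
  assumes "is_adjoint T Ts"
  shows "is_adjoint Ts T"
  unfolding is_adjoint_def
proof (intro allI)
  fix x y
  have "cinner (Ts x) y = cnj (cinner y (Ts x))"
    by (rule cinner_commute)
  also have "\<dots> = cnj (cinner (T y) x)"
    using assms by (simp add: is_adjoint_def)
  also have "\<dots> = cinner x (T y)"
    by (subst cinner_commute[of x]) simp
  finally show "cinner (Ts x) y = cinner x (T y)" .
qed

lemma clinear_adjoint:
  assumes "is_adjoint T Ts"
  shows "clinear Ts"
proof -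
  have adj: "cinner x (Ts y) = cinner (T x) y" for x y
    using assms by (simp add: is_adjoint_def)
  have "Ts (x + y) = Ts x + Ts y" for x y
    by (rule cinner_extensionality) (simp add: adj cinner_add_right)
  moreover have "Ts (scaleC c x) = scaleC c (Ts x)" for c x
    by (rule cinner_extensionality) (simp add: adj cinner_scaleC_right)
  ultimately show ?thesis
    by (simp add: clinear_def)
qed

lemma adjoint_norm_le:
  assumes adj: "is_adjoint T Ts" and bound: "\<And>x. norm (T x) \<le> C * norm x"
  shows "norm (Ts y) \<le> C * norm y"
proof -
  have "(norm (Ts y))\<^sup>2 = Re (cinner (T (Ts y)) y)"
    using adj by (simp add: power2_norm_eq_cinner is_adjoint_def)
  also have "\<dots> \<le> norm (T (Ts y)) * norm y"
    by (rule Re_cinner_le_norm)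
  also have "\<dots> \<le> C * norm (Ts y) * norm y"
    using bound by (simp add: mult_right_mono)
  finally have "norm (Ts y) * norm (Ts y) \<le> norm (Ts y) * (C * norm y)"
    by (simp add: power2_eq_square ac_simps)
  moreover have "0 \<le> C * norm y"
    using bound[of y] norm_ge_zero order_trans by blast
  ultimately show ?thesis
    by (cases "norm (Ts y) = 0") (simp_all add: mult_le_cancel_left_pos)
qed

lemma bounded_clinear_adjoint:
  assumes "bounded_clinear T" "is_adjoint T Ts"
  shows "bounded_clinear Ts"
proof -
  obtain C where "\<And>x. norm (T x) \<le> C * norm x"
    using assms(1) by (auto simp: bounded_clinear_def)
  then have "\<And>y. norm (Ts y) \<le> C * norm y"
    using assms(2) adjoint_norm_le by blast
  then show ?thesis
    using assms(2) clinear_adjoint by (auto simp: bounded_clinear_def)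
qed

lemma closed_csubspace_defK:
  assumes "bounded_clinear T" "is_adjoint T Ts"
  shows "closed_csubspace (defK T Ts)"
proof -
  have "bounded_clinear Ts"
    using assms by (rule bounded_clinear_adjoint)
  with assms(1) have "clinear (\<lambda>x. x - Ts (T x))"
    by (simp add: bounded_clinear_def clinear_def scaleC_diff_right)
  moreover have "bounded_linear (\<lambda>x. x - Ts (T x))"
    using bounded_linear_compose[OF bounded_linear_if_bounded_clinear[OF \<open>bounded_clinear Ts\<close>]
        bounded_linear_if_bounded_clinear[OF assms(1)]]
    by (intro bounded_linear_sub bounded_linear_ident)
  ultimately show ?thesis
    unfolding defK_def by (intro closed_csubspace_kernel linear_continuous_on)
qed

lemma defKs_eq_defK_adjoint: "defKs T Ts = defK Ts T"
  by (simp add: defKs_def defK_def)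

section \<open>The boundary quadruple of a bounded operator\<close>

locale adjoint_pair =
  fixes T Ts :: "'a::chilbert_space \<Rightarrow> 'a"
  assumes bounded: "bounded_clinear T" and adjoint: "is_adjoint T Ts"
begin

abbreviation K :: "'a set" where "K \<equiv> defK T Ts"
abbreviation Ks :: "'a set" where "Ks \<equiv> defKs T Ts"

lemma T_add: "T (x + y) = T x + T y"
  and T_scaleC: "T (scaleC c x) = scaleC c (T x)"
  using bounded by (simp_all add: bounded_clinear_def clinear_def)

lemma norm_T_le: "norm (T x) \<le> onorm T * norm x"
  using bounded_linear_if_bounded_clinear[OF bounded] by (rule onorm)

lemma norm_Ts_le: "norm (Ts y) \<le> onorm T * norm y"
  using adjoint norm_T_le by (rule adjoint_norm_le)

lemma cinner_T_left: "cinner (T x) y = cinner x (Ts y)"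
  using adjoint by (simp add: is_adjoint_def)

lemma closed_csubspace_K: "closed_csubspace K"
  using bounded adjoint by (rule closed_csubspace_defK)

lemma closed_csubspace_Ks: "closed_csubspace Ks"
  unfolding defKs_eq_defK_adjoint
  using bounded_clinear_adjoint[OF bounded adjoint] is_adjoint_sym[OF adjoint]
  by (rule closed_csubspace_defK)

lemma mem_K_iff: "x \<in> K \<longleftrightarrow> Ts (T x) = x"
  by (auto simp: defK_def)

lemma mem_Ks_iff: "y \<in> Ks \<longleftrightarrow> T (Ts y) = y"
  by (auto simp: defKs_def)

lemma T_mem_Ks: "x \<in> K \<Longrightarrow> T x \<in> Ks"
  by (simp add: mem_K_iff mem_Ks_iff)

lemma Ts_mem_K: "y \<in> Ks \<Longrightarrow> Ts y \<in> K"
  by (simp add: mem_K_iff mem_Ks_iff)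

lemma cinner_T_T: "y \<in> K \<Longrightarrow> cinner (T x) (T y) = cinner x y"
  by (simp add: cinner_T_left mem_K_iff)

definition decomposition :: "'a \<times> 'a \<Rightarrow> 'a \<Rightarrow> 'a \<Rightarrow> 'a \<Rightarrow> bool" where
  "decomposition a x0 ap am \<longleftrightarrow>
     x0 \<in> K \<and> ap \<in> orth K \<and> am \<in> orth Ks \<and> a = (x0, T x0) + (ap, 0) + (0, am)"

lemma decomposition_iff:
  "decomposition a x0 ap am \<longleftrightarrow>
     x0 \<in> K \<and> ap \<in> orth K \<and> am \<in> orth Ks \<and> a = (x0 + ap, T x0 + am)"
  by (simp add: decomposition_def)

lemma decomposition_unique:
  assumes "decomposition a x0 ap am" "decomposition a y0 bp bm"
  shows "x0 = y0" "ap = bp" "am = bm"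
proof -
  have "x0 - y0 = bp - ap"
    using assms by (auto simp: decomposition_iff algebra_simps)
  moreover have "x0 - y0 \<in> K" "bp - ap \<in> orth K"
    using assms closed_csubspace_K closed_csubspace_orth
    by (auto simp: decomposition_iff closed_csubspace_def intro: csubspace_diff)
  ultimately show "x0 = y0"
    using mem_orth_self_eq_0 by fastforce
  then show "ap = bp" "am = bm"
    using assms by (auto simp: decomposition_iff)
qed

lemma Gamma_plus_eq: "decomposition a x0 ap am \<Longrightarrow> Gamma_plus T Ts a = ap"
  unfolding Gamma_plus_def decomposition_def[symmetric]
  by (rule the_equality) (auto dest: decomposition_unique)

lemma Gamma_minus_eq: "decomposition a x0 ap am \<Longrightarrow> Gamma_minus T Ts a = am"
  unfolding Gamma_minus_def decomposition_def[symmetric]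
  by (rule the_equality) (auto dest: decomposition_unique)

lemma sympl_decomposition:
  assumes "decomposition a x0 ap am" "decomposition b y0 bp bm"
  shows "sympl a b = \<i> * cinner ap bp - \<i> * cinner am bm"
proof -
  have parts: "x0 \<in> K" "ap \<in> orth K" "am \<in> orth Ks" "a = (x0 + ap, T x0 + am)"
    "y0 \<in> K" "bp \<in> orth K" "bm \<in> orth Ks" "b = (y0 + bp, T y0 + bm)"
    using assms by (auto simp: decomposition_iff)
  have "cinner x0 bp = 0" "cinner ap y0 = 0" "cinner (T x0) bm = 0" "cinner am (T y0) = 0"
    using parts T_mem_Ks by (auto intro: orthD orthD')
  moreover have "cinner (T x0) (T y0) = cinner x0 y0"
    using parts(5) by (rule cinner_T_T)
  ultimately show ?thesis
    unfolding sympl_def parts(4,8)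
    by (simp add: cinner_add_left cinner_add_right algebra_simps)
qed

lemma mem_A_T_iff_decomposition: "a \<in> A_T T Ts \<longleftrightarrow> decomposition a (fst a) 0 0"
  by (auto simp: A_T_def decomposition_iff)

lemma decomposition_add:
  assumes "decomposition a x0 ap am" "decomposition b y0 bp bm"
  shows "decomposition (a + b) (x0 + y0) (ap + bp) (am + bm)"
  using assms closed_csubspace_K closed_csubspace_orth[of K] closed_csubspace_orth[of Ks]
  by (auto simp: decomposition_iff closed_csubspace_def csubspace_def T_add algebra_simps)

lemma decomposition_scaleC:
  assumes "decomposition a x0 ap am"
  shows "decomposition (scaleC_pair c a) (scaleC c x0) (scaleC c ap) (scaleC c am)"
  using assms closed_csubspace_K closed_csubspace_orth[of K] closed_csubspace_orth[of Ks]
  by (auto simp: decomposition_iff closed_csubspace_def csubspace_def scaleC_pair_def T_scaleC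
      scaleC_add_right)

lemma isotropic_A_T: "isotropic (A_T T Ts)"
  unfolding isotropic_def
proof (intro ballI)
  fix a b
  assume "a \<in> A_T T Ts" "b \<in> A_T T Ts"
  then show "sympl a b = 0"
    using sympl_decomposition[of a "fst a" 0 0 b "fst b" 0 0]
    by (simp add: mem_A_T_iff_decomposition)
qed

lemma decomposition_mem_s_orth:
  assumes "decomposition a x0 ap am"
  shows "a \<in> s_orth (A_T T Ts)"
  unfolding s_orth_def
proof (intro CollectI ballI)
  fix b
  assume "b \<in> A_T T Ts"
  then show "sympl a b = 0"
    using sympl_decomposition[OF assms, of b "fst b" 0 0]
    by (simp add: mem_A_T_iff_decomposition)
qed

lemma s_orth_A_T_residual_orth:
  assumes "(u, v) \<in> s_orth (A_T T Ts)" "v - T x0 \<in> orth Ks"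
  shows "u - x0 \<in> orth K"
proof -
  have "cinner k (u - x0) = 0" if "k \<in> K" for k
  proof -
    have "sympl (u, v) (k, T k) = 0"
      using assms(1) that by (auto simp: s_orth_def A_T_def)
    then have "cinner u k = cinner v (T k)"
      by (simp add: sympl_def)
    also have "\<dots> = cinner (T x0) (T k) + cinner (v - T x0) (T k)"
      by (simp add: cinner_diff_left)
    also have "cinner (v - T x0) (T k) = 0"
      using assms(2) T_mem_Ks[OF that] by (rule orthD')
    also have "cinner (T x0) (T k) = cinner x0 k"
      using that by (rule cinner_T_T)
    finally have "cinner (u - x0) k = 0"
      by (simp add: cinner_diff_left)
    then show ?thesis
      by (subst cinner_commute) simp
  qed
  then show ?thesis
    by (simp add: orth_def)
qed

lemma s_orth_A_T_decomposition:
  assumes "a \<in> s_orth (A_T T Ts)"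
  obtains x0 ap am where "decomposition a x0 ap am"
    "norm x0 \<le> onorm T * norm (snd a)" "norm am \<le> norm (snd a)"
proof -
  obtain u v where a: "a = (u, v)"
    by fastforce
  obtain v1 where "v1 \<in> Ks" and am: "v - v1 \<in> orth Ks"
    using closed_csubspace_orth_decomposition[OF closed_csubspace_Ks] by metis
  define x0 where "x0 = Ts v1"
  have "x0 \<in> K" "T x0 = v1"
    using \<open>v1 \<in> Ks\<close> by (simp_all add: x0_def Ts_mem_K mem_Ks_iff)
  then have "decomposition a x0 (u - x0) (v - v1)"
    using s_orth_A_T_residual_orth[of u v x0] assms am by (simp add: decomposition_iff a)
  moreover have "(norm v)\<^sup>2 = (norm v1)\<^sup>2 + (norm (v - v1))\<^sup>2"
    using norm_add_power2[of v1 "v - v1"] orthD[OF am \<open>v1 \<in> Ks\<close>] by simp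
  then have "norm v1 \<le> norm v" "norm (v - v1) \<le> norm v"
    by (simp_all add: power2_le_imp_le)
  moreover have "norm x0 \<le> onorm T * norm v"
    using norm_Ts_le[of v1] \<open>norm v1 \<le> norm v\<close>
      onorm_pos_le[OF bounded_linear_if_bounded_clinear[OF bounded]]
    by (simp add: x0_def) (meson mult_left_mono order_trans)
  ultimately show ?thesis
    using that a by simp
qed

lemma closed_A_T: "closed (A_T T Ts)"
proof -
  have "A_T T Ts = (K \<times> UNIV) \<inter> {a. snd a = T (fst a)}"
    by (auto simp: A_T_def)
  moreover have "closed (K \<times> UNIV)"
    using closed_csubspace_K by (simp add: closed_csubspace_def closed_Times)
  moreover have "closed {a::'a \<times> 'a. snd a = T (fst a)}"
    using linear_continuous_on[OF bounded_linear_snd]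
      linear_continuous_on[OF bounded_linear_compose[OF
          bounded_linear_if_bounded_clinear[OF bounded] bounded_linear_fst]]
    by (intro closed_Collect_eq)
  ultimately show ?thesis
    by (metis closed_Int)
qed

lemma decomposition_boundary_pair:
  assumes "p \<in> orth K" "m \<in> orth Ks"
  shows "decomposition (p, m) 0 p m"
proof -
  have "T 0 = 0"
    using T_add[of 0 0] by simp
  moreover have "0 \<in> K"
    using closed_csubspace_K by (simp add: closed_csubspace_def csubspace_def)
  ultimately show ?thesis
    using assms by (simp add: decomposition_iff)
qed

lemma zero_mem_A_T: "0 \<in> A_T T Ts"
  using decomposition_boundary_pair[of 0 0] by (simp add: mem_A_T_iff_decomposition zero_prod_def)

lemma add_mem_A_T: "a \<in> A_T T Ts \<Longrightarrow> b \<in> A_T T Ts \<Longrightarrow> a + b \<in> A_T T Ts"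
  using decomposition_add[of a "fst a" 0 0 b "fst b" 0 0]
  by (simp add: mem_A_T_iff_decomposition)

lemma scaleC_pair_mem_A_T: "a \<in> A_T T Ts \<Longrightarrow> scaleC_pair c a \<in> A_T T Ts"
  using decomposition_scaleC[of a "fst a" 0 0 c]
  by (simp add: mem_A_T_iff_decomposition scaleC_pair_def)

lemma Gamma_mem_orth:
  assumes "a \<in> s_orth (A_T T Ts)"
  shows "Gamma_plus T Ts a \<in> orth K" "Gamma_minus T Ts a \<in> orth Ks"
  using assms
  by (auto elim!: s_orth_A_T_decomposition simp: Gamma_plus_eq Gamma_minus_eq decomposition_iff)

lemma Gamma_add:
  assumes "a \<in> s_orth (A_T T Ts)" "b \<in> s_orth (A_T T Ts)"
  shows "Gamma_plus T Ts (a + b) = Gamma_plus T Ts a + Gamma_plus T Ts b"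
    "Gamma_minus T Ts (a + b) = Gamma_minus T Ts a + Gamma_minus T Ts b"
proof -
  obtain x0 ap am y0 bp bm where a: "decomposition a x0 ap am" and b: "decomposition b y0 bp bm"
    using assms by (metis s_orth_A_T_decomposition)
  then show "Gamma_plus T Ts (a + b) = Gamma_plus T Ts a + Gamma_plus T Ts b"
    "Gamma_minus T Ts (a + b) = Gamma_minus T Ts a + Gamma_minus T Ts b"
    using decomposition_add[OF a b] by (simp_all add: Gamma_plus_eq Gamma_minus_eq)
qed

lemma Gamma_scaleC:
  assumes "a \<in> s_orth (A_T T Ts)"
  shows "Gamma_plus T Ts (scaleC_pair c a) = scaleC c (Gamma_plus T Ts a)"
    "Gamma_minus T Ts (scaleC_pair c a) = scaleC c (Gamma_minus T Ts a)"
proof -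
  obtain x0 ap am where a: "decomposition a x0 ap am"
    using assms by (rule s_orth_A_T_decomposition)
  then show "Gamma_plus T Ts (scaleC_pair c a) = scaleC c (Gamma_plus T Ts a)"
    "Gamma_minus T Ts (scaleC_pair c a) = scaleC c (Gamma_minus T Ts a)"
    using decomposition_scaleC[OF a, where c = c] by (simp_all add: Gamma_plus_eq Gamma_minus_eq)
qed

lemma Gamma_bounded:
  assumes "a \<in> s_orth (A_T T Ts)"
  shows "norm (Gamma_plus T Ts a, Gamma_minus T Ts a) \<le> (2 + onorm T) * norm a"
proof -
  obtain x0 ap am where dec: "decomposition a x0 ap am"
    and x0: "norm x0 \<le> onorm T * norm (snd a)" and am: "norm am \<le> norm (snd a)"
    using assms by (rule s_orth_A_T_decomposition)
  have "ap = fst a - x0"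
    using dec by (auto simp: decomposition_iff)
  then have "norm ap \<le> norm (fst a) + onorm T * norm (snd a)"
    using norm_triangle_ineq4[of "fst a" x0] x0 by simp
  moreover have "norm (fst a) \<le> norm a" "norm (snd a) \<le> norm a"
    using norm_fst_le[of "fst a" "snd a"] norm_snd_le[of "snd a" "fst a"] by simp_all
  moreover have "0 \<le> onorm T"
    using onorm_pos_le[OF bounded_linear_if_bounded_clinear[OF bounded]] .
  ultimately have "norm ap + norm am \<le> (2 + onorm T) * norm a"
    using am mult_left_mono[of "norm (snd a)" "norm a" "onorm T"] by (simp add: algebra_simps)
  then show ?thesis
    using norm_Pair_le[of ap am] dec by (simp add: Gamma_plus_eq Gamma_minus_eq)
qed

lemma Gamma_surjective:
  assumes "p \<in> orth K" "m \<in> orth Ks"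
  shows "\<exists>a\<in>s_orth (A_T T Ts). Gamma_plus T Ts a = p \<and> Gamma_minus T Ts a = m"
proof -
  have dec: "decomposition (p, m) 0 p m"
    using assms by (rule decomposition_boundary_pair)
  show ?thesis
    using decomposition_mem_s_orth[OF dec] Gamma_plus_eq[OF dec] Gamma_minus_eq[OF dec] by blast
qed

lemma Gamma_kernel: "{a \<in> s_orth (A_T T Ts). Gamma_plus T Ts a = 0 \<and> Gamma_minus T Ts a = 0} = A_T T Ts"
proof (intro equalityI subsetI)
  fix a
  assume a: "a \<in> {a \<in> s_orth (A_T T Ts). Gamma_plus T Ts a = 0 \<and> Gamma_minus T Ts a = 0}"
  then obtain x0 ap am where dec: "decomposition a x0 ap am"
    by (auto elim: s_orth_A_T_decomposition)
  with a have "ap = 0" "am = 0"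
    by (auto simp: Gamma_plus_eq Gamma_minus_eq)
  with dec show "a \<in> A_T T Ts"
    by (auto simp: mem_A_T_iff_decomposition decomposition_iff)
next
  fix a
  assume "a \<in> A_T T Ts"
  then show "a \<in> {a \<in> s_orth (A_T T Ts). Gamma_plus T Ts a = 0 \<and> Gamma_minus T Ts a = 0}"
    unfolding mem_A_T_iff_decomposition
    by (auto intro: decomposition_mem_s_orth simp: Gamma_plus_eq Gamma_minus_eq)
qed

lemma Green_formula:
  assumes "a \<in> s_orth (A_T T Ts)" "b \<in> s_orth (A_T T Ts)"
  shows "sympl a b = \<i> * cinner (Gamma_plus T Ts a) (Gamma_plus T Ts b)
                    - \<i> * cinner (Gamma_minus T Ts a) (Gamma_minus T Ts b)"
proof -
  obtain x0 ap am y0 bp bm where "decomposition a x0 ap am" "decomposition b y0 bp bm"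
    using assms by (metis s_orth_A_T_decomposition)
  then show ?thesis
    by (simp add: sympl_decomposition Gamma_plus_eq Gamma_minus_eq)
qed

theorem boundary_quadruple_A_T:
  "boundary_quadruple (A_T T Ts) (orth K) (orth Ks) (Gamma_plus T Ts) (Gamma_minus T Ts)"
  unfolding boundary_quadruple_def
  by (intro conjI ballI allI exI[of _ "2 + onorm T"])
    (simp_all add: closed_A_T zero_mem_A_T add_mem_A_T scaleC_pair_mem_A_T isotropic_A_T
      closed_csubspace_orth Gamma_mem_orth Gamma_add Gamma_scaleC Gamma_bounded
      Gamma_surjective Gamma_kernel Green_formula)

end

theorem lemma4p3:
  fixes T Ts :: "'a::chilbert_space \<Rightarrow> 'a"
  assumes "separable_chilbert TYPE('a)"
    and "infinite_dimensional TYPE('a)"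
    and "cnu_contraction T"
    and "is_adjoint T Ts"
  shows "boundary_quadruple (A_T T Ts) (orth (defK T Ts)) (orth (defKs T Ts))
           (Gamma_plus T Ts) (Gamma_minus T Ts)"
proof -
  interpret adjoint_pair T Ts
    using assms(3,4) by unfold_locales (simp_all add: cnu_contraction_def contraction_def)
  show ?thesis
    by (rule boundary_quadruple_A_T)
qed

end
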